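(* Let $\mathcal D=(A,D)$ be a dependence alphabet and suppose there are distinct letters $a,b\in A$ with $(a,b)\in D$. Let $\mathcal R\subseteq\mathbb M(\mathcal D)^2$ be a rational trace relation. Then there exist lc-rational trace relations $\mathcal R_1,\mathcal R_2$ such that $\mathcal R=\mathcal R_1^{-1}\circ\mathcal R_2$.
   Context: A dependence alphabet is $\mathcal D=(A,D)$, $A$ finite, $D\subseteq A\times A$ reflexive and symmetric; $x,y$ independent if $(x,y)\notin D$. $\sim$ is the least congruence on $A^*$ with $xy\sim yx$ for independent $x,y$; $\mathbb M(\mathcal D)=A^*/{\sim}$, $[w]$ the class of $w$, $[R]=\{([u],[v])\mid(u,v)\in R\}$. A trace relation is rational if it equals $[R]$ for a rational word relation $R$ (one accepted by a finite transducer). A word relation $R$ is left-closed if $u\sim u'$, $(u',v')\in R$ imply some $v$ with $(u,v)\in R$, $v\sim v'$; a trace relation is lc-rational if it equals $[R]$ for a left-closed rational word relation $R$. $\mathcal R^{-1}=\{(y,x)\mid(x,y)\in\mathcal R\}$ and $\mathcal R_1\circ\mathcal R_2=\{(x,z)\mid\exists y:(x,y)\in\mathcal R_1,(y,z)\in\mathcal R_2\}$. *)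

theory Defs
  imports Main
begin

definition dep_alphabet :: "'a set \<Rightarrow> ('a \<times> 'a) set \<Rightarrow> bool" where
  "dep_alphabet A D \<longleftrightarrow> finite A \<and> D \<subseteq> A \<times> A \<and> (\<forall>x\<in>A. (x, x) \<in> D) \<and> sym D"

inductive trace_eq :: "'a set \<Rightarrow> ('a \<times> 'a) set \<Rightarrow> 'a list \<Rightarrow> 'a list \<Rightarrow> bool"
  for A :: "'a set" and D :: "('a \<times> 'a) set" where
  swap: "x \<in> A \<Longrightarrow> y \<in> A \<Longrightarrow> (x, y) \<notin> D \<Longrightarrow> trace_eq A D [x, y] [y, x]"
| refl: "w \<in> lists A \<Longrightarrow> trace_eq A D w w"
| sym: "trace_eq A D u v \<Longrightarrow> trace_eq A D v u"
| trans: "trace_eq A D u v \<Longrightarrow> trace_eq A D v w \<Longrightarrow> trace_eq A D u w"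
| cong: "trace_eq A D u u' \<Longrightarrow> trace_eq A D v v' \<Longrightarrow> trace_eq A D (u @ v) (u' @ v')"

definition trace_of :: "'a set \<Rightarrow> ('a \<times> 'a) set \<Rightarrow> 'a list \<Rightarrow> 'a list set" where
  "trace_of A D w = {v. trace_eq A D w v}"

definition trace_monoid :: "'a set \<Rightarrow> ('a \<times> 'a) set \<Rightarrow> 'a list set set" where
  "trace_monoid A D = trace_of A D ` lists A"

definition trace_image :: "'a set \<Rightarrow> ('a \<times> 'a) set \<Rightarrow> ('a list \<times> 'a list) set
    \<Rightarrow> ('a list set \<times> 'a list set) set" where
  "trace_image A D R = (\<lambda>(u, v). (trace_of A D u, trace_of A D v)) ` R"

inductive trans_run :: "(nat \<times> 'a list \<times> 'a list \<times> nat) set \<Rightarrow> nat \<Rightarrow> 'a list \<Rightarrow> 'a list \<Rightarrow> nat \<Rightarrow> bool"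
  for \<Delta> where
  Nil: "trans_run \<Delta> q [] [] q"
| Step: "(p, x, y, q) \<in> \<Delta> \<Longrightarrow> trans_run \<Delta> q u v r \<Longrightarrow> trans_run \<Delta> p (x @ u) (y @ v) r"

definition rational_word_rel :: "'a set \<Rightarrow> ('a list \<times> 'a list) set \<Rightarrow> bool" where
  "rational_word_rel A R \<longleftrightarrow>
     (\<exists>(Q :: nat set) I F \<Delta>. finite Q \<and> finite \<Delta> \<and> I \<subseteq> Q \<and> F \<subseteq> Q \<and>
        \<Delta> \<subseteq> Q \<times> lists A \<times> lists A \<times> Q \<and>
        R = {(u, v). \<exists>p\<in>I. \<exists>q\<in>F. trans_run \<Delta> p u v q})"

definition left_closed :: "'a set \<Rightarrow> ('a \<times> 'a) set \<Rightarrow> ('a list \<times> 'a list) set \<Rightarrow> bool" where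
  "left_closed A D R \<longleftrightarrow>
     (\<forall>u u' v'. trace_eq A D u u' \<longrightarrow> (u', v') \<in> R \<longrightarrow>
        (\<exists>v. (u, v) \<in> R \<and> trace_eq A D v v'))"

definition rational_trace_rel :: "'a set \<Rightarrow> ('a \<times> 'a) set \<Rightarrow> ('a list set \<times> 'a list set) set \<Rightarrow> bool" where
  "rational_trace_rel A D \<R> \<longleftrightarrow> (\<exists>R. rational_word_rel A R \<and> \<R> = trace_image A D R)"

definition lc_rational_trace_rel :: "'a set \<Rightarrow> ('a \<times> 'a) set \<Rightarrow> ('a list set \<times> 'a list set) set \<Rightarrow> bool" where
  "lc_rational_trace_rel A D \<R> \<longleftrightarrow>
     (\<exists>R. rational_word_rel A R \<and> left_closed A D R \<and> \<R> = trace_image A D R)"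

end

theory Submission
  imports Defs
begin

text \<open>
  Let \<open>R\<close> be accepted by a transducer with transition set \<open>\<Delta>\<close>. Number the transitions and
  encode transition number \<open>n\<close> by the word \<open>a\<^sup>n b\<close>; the code of a run is then a word over
  \<open>{a, b}\<close> from which the run can be decoded. Relabelling every transition by (code, input)
  resp. (code, output) gives transducers for \<open>R\<^sub>1\<close> and \<open>R\<^sub>2\<close>, and \<open>R = R\<^sub>1\<inverse> O R\<^sub>2\<close> already on
  words. Since \<open>a\<close> and \<open>b\<close> are dependent, a word over \<open>{a, b}\<close> is trace equivalent only to
  itself; hence \<open>R\<^sub>1\<close> and \<open>R\<^sub>2\<close> are left-closed and the decomposition passes to traces.
\<close>

type_synonym 'a transition = "nat \<times> 'a list \<times> 'a list \<times> nat"

fun in_label :: "'a transition \<Rightarrow> 'a list" where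
  "in_label (p, x, y, q) = x"

fun out_label :: "'a transition \<Rightarrow> 'a list" where
  "out_label (p, x, y, q) = y"

fun trans_path :: "'a transition set \<Rightarrow> nat \<Rightarrow> 'a transition list \<Rightarrow> nat \<Rightarrow> bool" where
  "trans_path \<Delta> p [] q \<longleftrightarrow> p = q"
| "trans_path \<Delta> p ((p', x, y, q') # ts) q \<longleftrightarrow> (p', x, y, q') \<in> \<Delta> \<and> p' = p \<and> trans_path \<Delta> q' ts q"

definition relabel :: "('a transition \<Rightarrow> 'b list) \<Rightarrow> ('a transition \<Rightarrow> 'b list)
    \<Rightarrow> 'a transition set \<Rightarrow> 'b transition set" where
  "relabel f g \<Delta> = (\<lambda>t. (fst t, f t, g t, snd (snd (snd t)))) ` \<Delta>"

definition trans_rel :: "nat set \<Rightarrow> nat set \<Rightarrow> 'a transition set \<Rightarrow> ('a list \<times> 'a list) set" where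
  "trans_rel I F \<Delta> = {(u, v). \<exists>p\<in>I. \<exists>q\<in>F. trans_run \<Delta> p u v q}"

lemma trans_path_subset: "trans_path \<Delta> p ts q \<Longrightarrow> set ts \<subseteq> \<Delta>"
  by (induction \<Delta> p ts q rule: trans_path.induct) auto

lemma trans_run_relabel_imp_path:
  assumes "trans_run (relabel f g \<Delta>) p w u q"
  shows "\<exists>ts. trans_path \<Delta> p ts q \<and> w = concat (map f ts) \<and> u = concat (map g ts)"
  using assms
proof (induction rule: trans_run.induct)
  case (Nil q)
  show ?case by (intro exI[of _ "[]"]) simp
next
  case (Step p x y q w u r)
  then obtain t where "t \<in> \<Delta>" and t: "(p, x, y, q) = (fst t, f t, g t, snd (snd (snd t)))"
    by (auto simp: relabel_def)
  moreover obtain ts where "trans_path \<Delta> q ts r" "w = concat (map f ts)" "u = concat (map g ts)"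
    using Step.IH by blast
  ultimately show ?case
    by (intro exI[of _ "t # ts"]) (cases t, auto)
qed

lemma trans_path_imp_run_relabel:
  "trans_path \<Delta> p ts q \<Longrightarrow> trans_run (relabel f g \<Delta>) p (concat (map f ts)) (concat (map g ts)) q"
proof (induction \<Delta> p ts q rule: trans_path.induct)
  case (1 \<Delta> p q)
  then show ?case by (simp add: trans_run.Nil)
next
  case (2 \<Delta> p p' x y q' ts q)
  then have "(p, f (p', x, y, q'), g (p', x, y, q'), q') \<in> relabel f g \<Delta>"
    by (force simp: relabel_def)
  with 2 show ?case by (auto intro: trans_run.Step)
qed

lemma trans_run_relabel_iff:
  "trans_run (relabel f g \<Delta>) p w u q \<longleftrightarrow>
     (\<exists>ts. trans_path \<Delta> p ts q \<and> w = concat (map f ts) \<and> u = concat (map g ts))"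
  using trans_run_relabel_imp_path trans_path_imp_run_relabel by metis

lemma relabel_in_out_label: "relabel in_label out_label \<Delta> = \<Delta>"
proof -
  have "(fst t, in_label t, out_label t, snd (snd (snd t))) = t" for t :: "'a transition"
    by (cases t) simp
  then show ?thesis by (simp add: relabel_def)
qed

lemma trans_run_iff_path:
  "trans_run \<Delta> p u v q \<longleftrightarrow>
     (\<exists>ts. trans_path \<Delta> p ts q \<and> u = concat (map in_label ts) \<and> v = concat (map out_label ts))"
  using trans_run_relabel_iff[of in_label out_label \<Delta>] by (simp add: relabel_in_out_label)

lemma trans_rel_relabel_subset:
  assumes "\<And>t. t \<in> \<Delta> \<Longrightarrow> f t \<in> lists B \<and> g t \<in> lists C"
  shows "trans_rel I F (relabel f g \<Delta>) \<subseteq> lists B \<times> lists C"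
  using assms trans_path_subset by (fastforce simp: trans_rel_def trans_run_relabel_iff)

lemma rational_word_rel_relabel:
  assumes "finite Q" "finite \<Delta>" "I \<subseteq> Q" "F \<subseteq> Q" "\<Delta> \<subseteq> Q \<times> UNIV \<times> UNIV \<times> Q"
    and "\<And>t. t \<in> \<Delta> \<Longrightarrow> f t \<in> lists A \<and> g t \<in> lists A"
  shows "rational_word_rel A (trans_rel I F (relabel f g \<Delta>))"
  unfolding rational_word_rel_def trans_rel_def
proof (intro exI conjI)
  show "relabel f g \<Delta> \<subseteq> Q \<times> lists A \<times> lists A \<times> Q"
  proof
    fix t' assume "t' \<in> relabel f g \<Delta>"
    then obtain t where "t \<in> \<Delta>" "t' = (fst t, f t, g t, snd (snd (snd t)))"
      by (auto simp: relabel_def)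
    with assms(5,6) show "t' \<in> Q \<times> lists A \<times> lists A \<times> Q"
      by (cases t) auto
  qed
qed (use assms(1-4) in \<open>simp_all add: relabel_def\<close>)

lemma trans_rel_eq_converse_relcomp:
  assumes "inj_on (\<lambda>ts. concat (map \<kappa> ts)) (lists \<Delta>)"
  shows "trans_rel I F \<Delta> =
    (trans_rel I F (relabel \<kappa> in_label \<Delta>))\<inverse> O trans_rel I F (relabel \<kappa> out_label \<Delta>)"
proof (intro equalityI subrelI)
  fix u v assume "(u, v) \<in> trans_rel I F \<Delta>"
  then obtain p q ts where "p \<in> I" "q \<in> F" "trans_path \<Delta> p ts q"
    and "u = concat (map in_label ts)" "v = concat (map out_label ts)"
    by (auto simp: trans_rel_def trans_run_iff_path)
  then have "(concat (map \<kappa> ts), u) \<in> trans_rel I F (relabel \<kappa> in_label \<Delta>)"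
    and "(concat (map \<kappa> ts), v) \<in> trans_rel I F (relabel \<kappa> out_label \<Delta>)"
    by (auto simp: trans_rel_def trans_run_relabel_iff)
  then show "(u, v) \<in> (trans_rel I F (relabel \<kappa> in_label \<Delta>))\<inverse> O trans_rel I F (relabel \<kappa> out_label \<Delta>)"
    by blast
next
  fix u v
  assume "(u, v) \<in> (trans_rel I F (relabel \<kappa> in_label \<Delta>))\<inverse> O trans_rel I F (relabel \<kappa> out_label \<Delta>)"
  then obtain p\<^sub>1 q\<^sub>1 ts\<^sub>1 p\<^sub>2 q\<^sub>2 ts\<^sub>2 where
    run\<^sub>1: "p\<^sub>1 \<in> I" "q\<^sub>1 \<in> F" "trans_path \<Delta> p\<^sub>1 ts\<^sub>1 q\<^sub>1" "u = concat (map in_label ts\<^sub>1)" and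
    run\<^sub>2: "trans_path \<Delta> p\<^sub>2 ts\<^sub>2 q\<^sub>2" "v = concat (map out_label ts\<^sub>2)" and
    same_code: "concat (map \<kappa> ts\<^sub>1) = concat (map \<kappa> ts\<^sub>2)"
    by (auto simp: trans_rel_def trans_run_relabel_iff)
  have "ts\<^sub>1 = ts\<^sub>2"
    using inj_onD[OF assms same_code] trans_path_subset run\<^sub>1(3) run\<^sub>2(1) by blast
  with run\<^sub>1 run\<^sub>2 show "(u, v) \<in> trans_rel I F \<Delta>"
    by (auto simp: trans_rel_def trans_run_iff_path)
qed

lemma replicate_append_Cons_eq_imp:
  assumes "a \<noteq> b" "replicate i a @ b # xs = replicate j a @ b # ys"
  shows "i = j \<and> xs = ys"
  using assms
proof (induction i arbitrary: j)
  case 0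
  then show ?case by (cases j) auto
next
  case (Suc i)
  then show ?case by (cases j) auto
qed

lemma concat_unary_code_eq_imp_eq:
  assumes "a \<noteq> b" "inj_on h S" "ts \<in> lists S" "ts' \<in> lists S"
    and "concat (map (\<lambda>t. replicate (h t) a @ [b]) ts) = concat (map (\<lambda>t. replicate (h t) a @ [b]) ts')"
  shows "ts = ts'"
  using assms(3-5)
proof (induction ts arbitrary: ts' rule: list.induct)
  case Nil
  then show ?case by (cases ts') auto
next
  case (Cons t ts)
  then obtain t' ts'' where ts': "ts' = t' # ts''" by (cases ts') auto
  let ?code = "\<lambda>ts. concat (map (\<lambda>t. replicate (h t) a @ [b]) ts)"
  have "replicate (h t) a @ b # ?code ts = replicate (h t') a @ b # ?code ts''"
    using Cons.prems(3) ts' by simp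
  then have "h t = h t'" and "?code ts = ?code ts''"
    using replicate_append_Cons_eq_imp[OF assms(1)] by blast+
  moreover have "t \<in> S" "t' \<in> S" "ts \<in> lists S" "ts'' \<in> lists S"
    using Cons.prems(1,2) ts' by auto
  ultimately have "t = t'" and "ts = ts''"
    using inj_onD[OF assms(2)] Cons.IH by blast+
  with ts' show ?case by simp
qed

lemma inj_on_concat_unary_code:
  assumes "a \<noteq> b" "inj_on h S"
  shows "inj_on (\<lambda>ts. concat (map (\<lambda>t. replicate (h t) a @ [b]) ts)) (lists S)"
  using concat_unary_code_eq_imp_eq[OF assms] unfolding inj_on_def by blast

lemma trace_eq_lists_clique:
  assumes "trace_eq A D u v" "B \<times> B \<subseteq> D"
  shows "(u \<in> lists B \<longleftrightarrow> v \<in> lists B) \<and> (u \<in> lists B \<longrightarrow> u = v)"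
  using assms(1)
proof (induction rule: trace_eq.induct)
  case (swap x y)
  then show ?case using assms(2) by auto
next
  case (refl w)
  then show ?case by simp
next
  case (sym u v)
  then show ?case by blast
next
  case (trans u v w)
  then show ?case by blast
next
  case (cong u u' v v')
  then show ?case by (simp only: append_in_lists_conv) blast
qed

lemma trace_eq_clique_eq:
  assumes "trace_eq A D u v" "B \<times> B \<subseteq> D" "u \<in> lists B \<or> v \<in> lists B"
  shows "u = v"
  using assms trace_eq_lists_clique by metis

lemma left_closed_if_clique:
  assumes "B \<times> B \<subseteq> D" "R \<subseteq> lists B \<times> lists A"
  shows "left_closed A D R"
  unfolding left_closed_def
proof (intro allI impI)
  fix u u' v' assume "trace_eq A D u u'" and R: "(u', v') \<in> R"
  then have "u' \<in> lists B" "v' \<in> lists A"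
    using assms(2) by auto
  then have "u = u'"
    using trace_eq_clique_eq[OF \<open>trace_eq A D u u'\<close> assms(1)] by blast
  with R \<open>v' \<in> lists A\<close> show "\<exists>v. (u, v) \<in> R \<and> trace_eq A D v v'"
    by (blast intro: trace_eq.refl)
qed

lemma trace_image_converse_relcomp:
  assumes "B \<times> B \<subseteq> D" "B \<subseteq> A" "R\<^sub>1 \<subseteq> lists B \<times> C" "R\<^sub>2 \<subseteq> lists B \<times> C"
  shows "trace_image A D (R\<^sub>1\<inverse> O R\<^sub>2) = (trace_image A D R\<^sub>1)\<inverse> O trace_image A D R\<^sub>2"
proof (intro equalityI subrelI)
  fix X Z assume "(X, Z) \<in> trace_image A D (R\<^sub>1\<inverse> O R\<^sub>2)"
  then show "(X, Z) \<in> (trace_image A D R\<^sub>1)\<inverse> O trace_image A D R\<^sub>2"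
    unfolding trace_image_def by force
next
  fix X Z assume "(X, Z) \<in> (trace_image A D R\<^sub>1)\<inverse> O trace_image A D R\<^sub>2"
  then obtain w\<^sub>1 u w\<^sub>2 v where R: "(w\<^sub>1, u) \<in> R\<^sub>1" "(w\<^sub>2, v) \<in> R\<^sub>2"
    and same_trace: "trace_of A D w\<^sub>1 = trace_of A D w\<^sub>2"
    and X: "X = trace_of A D u" and Z: "Z = trace_of A D v"
    unfolding trace_image_def by auto
  have "w\<^sub>1 \<in> lists B" "w\<^sub>2 \<in> lists B"
    using assms(3,4) R by auto
  then have "w\<^sub>2 \<in> trace_of A D w\<^sub>2"
    using assms(2) by (auto simp: trace_of_def intro: trace_eq.refl)
  then have "w\<^sub>2 \<in> trace_of A D w\<^sub>1"
    using same_trace by simp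
  then have "trace_eq A D w\<^sub>1 w\<^sub>2"
    by (simp add: trace_of_def)
  then have "w\<^sub>1 = w\<^sub>2"
    using trace_eq_clique_eq[OF _ assms(1)] \<open>w\<^sub>1 \<in> lists B\<close> by blast
  with R have "(u, v) \<in> R\<^sub>1\<inverse> O R\<^sub>2"
    by blast
  then show "(X, Z) \<in> trace_image A D (R\<^sub>1\<inverse> O R\<^sub>2)"
    unfolding trace_image_def X Z by force
qed

theorem proposition4p11:
  fixes A :: "'a set" and D :: "('a \<times> 'a) set"
    and \<R> :: "('a list set \<times> 'a list set) set"
  assumes "dep_alphabet A D"
    and "a \<in> A" and "b \<in> A" and "a \<noteq> b" and "(a, b) \<in> D"
    and "\<R> \<subseteq> trace_monoid A D \<times> trace_monoid A D"
    and "rational_trace_rel A D \<R>"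
  shows "\<exists>\<R>1 \<R>2. lc_rational_trace_rel A D \<R>1 \<and> lc_rational_trace_rel A D \<R>2 \<and>
           \<R> = \<R>1\<inverse> O \<R>2"
proof -
  obtain Q :: "nat set" and I F \<Delta> where Q: "finite Q" "finite \<Delta>" "I \<subseteq> Q" "F \<subseteq> Q"
    and \<Delta>: "\<Delta> \<subseteq> Q \<times> lists A \<times> lists A \<times> Q" and \<R>: "\<R> = trace_image A D (trans_rel I F \<Delta>)"
    using assms(7) unfolding rational_trace_rel_def rational_word_rel_def trans_rel_def by blast
  obtain h :: "'a transition \<Rightarrow> nat" where "inj_on h \<Delta>"
    using finite_imp_inj_to_nat_seg[OF \<open>finite \<Delta>\<close>] by metis
  define \<kappa> where "\<kappa> t = replicate (h t) a @ [b]" for t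
  have clique: "{a, b} \<times> {a, b} \<subseteq> D"
    using assms(1,2,3,5) unfolding dep_alphabet_def sym_def by auto
  have codes: "\<kappa> t \<in> lists {a, b}" for t
    by (auto simp: \<kappa>_def)
  have labels: "in_label t \<in> lists A \<and> out_label t \<in> lists A" if "t \<in> \<Delta>" for t
    using that \<Delta> by (cases t) auto
  define R\<^sub>1 where "R\<^sub>1 = trans_rel I F (relabel \<kappa> in_label \<Delta>)"
  define R\<^sub>2 where "R\<^sub>2 = trans_rel I F (relabel \<kappa> out_label \<Delta>)"
  have R\<^sub>1\<^sub>2: "R\<^sub>1 \<subseteq> lists {a, b} \<times> lists A" "R\<^sub>2 \<subseteq> lists {a, b} \<times> lists A"
    unfolding R\<^sub>1_def R\<^sub>2_def by (rule trans_rel_relabel_subset, simp add: codes labels)+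
  have \<Delta>_states: "\<Delta> \<subseteq> Q \<times> UNIV \<times> UNIV \<times> Q"
    using \<Delta> by blast
  have codes_A: "\<kappa> t \<in> lists A" for t
    using codes[of t] assms(2,3) by (auto elim: lists_mono[THEN subsetD, rotated])
  have "rational_word_rel A R\<^sub>1" "rational_word_rel A R\<^sub>2"
    unfolding R\<^sub>1_def R\<^sub>2_def
    by (rule rational_word_rel_relabel[OF Q \<Delta>_states], simp add: codes_A labels)+
  with R\<^sub>1\<^sub>2 have "lc_rational_trace_rel A D (trace_image A D R\<^sub>1)"
    and "lc_rational_trace_rel A D (trace_image A D R\<^sub>2)"
    unfolding lc_rational_trace_rel_def by (metis left_closed_if_clique[OF clique])+
  moreover have "trans_rel I F \<Delta> = R\<^sub>1\<inverse> O R\<^sub>2"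
    unfolding R\<^sub>1_def R\<^sub>2_def \<kappa>_def
    by (rule trans_rel_eq_converse_relcomp[OF inj_on_concat_unary_code[OF assms(4) \<open>inj_on h \<Delta>\<close>]])
  then have "\<R> = (trace_image A D R\<^sub>1)\<inverse> O trace_image A D R\<^sub>2"
    using trace_image_converse_relcomp[OF clique _ R\<^sub>1\<^sub>2] assms(2,3) by (simp add: \<R>)
  ultimately show ?thesis
    by (intro exI conjI)
qed

end
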